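(* Let $K$ be a field of characteristic $\neq 2$, $n\ge1$, and let $\mathcal C$ be an EACP over $K$ with natural basis $\{h_1,\dots,h_n,r\}$ and structural constants $a_{ij},b_i$, and suppose $\det(a_{ij})_{i,j=1}^n\neq0$. Then $\mathcal C$ is centroidal: every $K$-linear map $T:\mathcal C\to\mathcal C$ with $TL_x=L_xT$ and $TR_x=R_xT$ for all $x\in\mathcal C$ (where $L_x(y)=xy$, $R_x(y)=yx$) is a scalar multiple of the identity, so that the centroid $\Gamma(\mathcal C)$ is isomorphic to $K$.
   Context: An EACP over a field $K$ (characteristic $\neq 2$) is a $K$-algebra $\mathcal C$ with a basis $\{h_1,\dots,h_n,r\}$ (called a natural basis) whose multiplication is determined by bilinearity from $$h_ir=rh_i=\tfrac12\Big(\sum_{j=1}^n a_{ij}h_j+b_ir\Big),\qquad h_ih_j=0\ (i,j=1,\dots,n),\qquad rr=0,$$ for some constants $a_{ij},b_i\in K$. The centroid $\Gamma(\mathcal A)$ of an algebra $\mathcal A$ is the set of linear maps $T:\mathcal A\to\mathcal A$ commuting with all left and right multiplication operators; $\mathcal A$ is centroidal if $\Gamma(\mathcal A)\cong K$. *)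

theory Defs
  imports "HOL-Analysis.Analysis"
begin

text \<open>The EACP with natural basis h_1..h_n, r is modelled as the coordinate space
  of functions 'n option => 'a, where coordinate Some i is the coefficient of h_i
  and coordinate None is the coefficient of r.  Structural constants:
  a :: 'a^'n^'n (a $ i $ j = a_ij), b :: 'a^'n (b $ i = b_i).\<close>

definition eacp_basis_prod :: "'a::field^'n^'n \<Rightarrow> 'a^'n \<Rightarrow> 'n option \<Rightarrow> 'n option \<Rightarrow> ('n option \<Rightarrow> 'a)"
  where "eacp_basis_prod a b p q =
    (case (p, q) of
       (Some i, None) \<Rightarrow> (\<lambda>k. case k of Some j \<Rightarrow> a $ i $ j / 2 | None \<Rightarrow> b $ i / 2)
     | (None, Some i) \<Rightarrow> (\<lambda>k. case k of Some j \<Rightarrow> a $ i $ j / 2 | None \<Rightarrow> b $ i / 2)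
     | _ \<Rightarrow> (\<lambda>k. 0))"

definition eacp_mult :: "'a::field^'n::finite^'n \<Rightarrow> 'a^'n \<Rightarrow> ('n option \<Rightarrow> 'a) \<Rightarrow> ('n option \<Rightarrow> 'a) \<Rightarrow> ('n option \<Rightarrow> 'a)"
  where "eacp_mult a b x y =
    (\<lambda>k. \<Sum>p\<in>UNIV. \<Sum>q\<in>UNIV. x p * y q * eacp_basis_prod a b p q k)"

definition coord_linear :: "(('n option \<Rightarrow> 'a::field) \<Rightarrow> ('n option \<Rightarrow> 'a)) \<Rightarrow> bool"
  where "coord_linear T \<longleftrightarrow>
    (\<forall>x y. T (\<lambda>k. x k + y k) = (\<lambda>k. T x k + T y k)) \<and> (\<forall>c x. T (\<lambda>k. c * x k) = (\<lambda>k. c * T x k))"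

definition eacp_centroid :: "'a::field^'n::finite^'n \<Rightarrow> 'a^'n \<Rightarrow> (('n option \<Rightarrow> 'a) \<Rightarrow> ('n option \<Rightarrow> 'a)) set"
  where "eacp_centroid a b = {T. coord_linear T \<and>
     (\<forall>x y. T (eacp_mult a b x y) = eacp_mult a b x (T y)) \<and>
     (\<forall>x y. T (eacp_mult a b y x) = eacp_mult a b (T y) x)}"

end

theory Submission
  imports Defs
begin

text \<open>Let \<open>r\<close> be the last basis vector and \<open>u = h\<^sub>1 + \<dots> + h\<^sub>n\<close>. Left multiplication by \<open>r\<close>
  acts on the \<open>h\<close>-coordinates through the invertible matrix \<open>a\<^sup>T/2\<close>, and \<open>u\<cdot>y\<close> has
  \<open>h\<close>-coordinates \<open>y\<^sub>r (\<Sum>\<^sub>i a\<^sub>i\<^sub>j) / 2\<close>, so an element \<open>z\<close> is determined by \<open>r z\<close> and \<open>u z\<close>.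
  For \<open>T\<close> in the centroid, \<open>r\<cdot>T(r) = T(rr) = 0\<close> forces \<open>T(r) = s r\<close>. Then for every \<open>x\<close>,
  commutativity gives \<open>r\<cdot>T(x) = T(xr) = x\<cdot>T(r) = r\<cdot>(s x)\<close>, and \<open>u x = x\<^sub>r (u r)\<close> gives
  \<open>u\<cdot>T(x) = x\<^sub>r (u\<cdot>T(r)) = u\<cdot>(s x)\<close>; hence \<open>T(x) = s x\<close>.\<close>

lemma left_kernel_trivial_if_det_nz:
  fixes a :: "'a::field^'n::finite^'n"
  assumes "det a \<noteq> 0" and "\<And>j. (\<Sum>i\<in>UNIV. c i * a$i$j) = 0"
  shows "c i = 0"
proof -
  have "(\<chi> i. c i) v* a = 0"
    by (simp add: vector_matrix_mult_def vec_eq_iff mult.commute assms(2))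
  then have "transpose a *v (\<chi> i. c i) = 0"
    by simp
  moreover have "\<exists>B. B ** transpose a = mat 1"
    using assms(1) invertible_det_nz invertible_left_inverse by (metis det_transpose)
  ultimately have "(\<chi> i. c i) = 0"
    using matrix_left_invertible_ker by blast
  then show ?thesis
    by (simp add: vec_eq_iff)
qed

lemma sum_UNIV_option:
  "(\<Sum>p\<in>(UNIV::'n::finite option set). f p) = f None + (\<Sum>i\<in>UNIV. f (Some i))"
  by (simp add: UNIV_option_conv sum.reindex)

lemma eacp_mult_Some:
  "eacp_mult a b x y (Some j) = (\<Sum>i\<in>UNIV. (x (Some i) * y None + x None * y (Some i)) * a$i$j) / 2"
  by (simp add: eacp_mult_def sum_UNIV_option eacp_basis_prod_def sum_divide_distrib
      sum.distrib algebra_simps add_divide_distrib)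

lemma eacp_mult_None:
  "eacp_mult a b x y None = (\<Sum>i\<in>UNIV. (x (Some i) * y None + x None * y (Some i)) * b$i) / 2"
  by (simp add: eacp_mult_def sum_UNIV_option eacp_basis_prod_def sum_divide_distrib
      sum.distrib algebra_simps add_divide_distrib)

lemma eacp_mult_commute: "eacp_mult a b x y = eacp_mult a b y x"
proof
  fix k
  show "eacp_mult a b x y k = eacp_mult a b y x k"
    by (cases k) (simp_all add: eacp_mult_Some eacp_mult_None ac_simps)
qed

lemma eacp_mult_scale_right:
  "eacp_mult a b x (\<lambda>k. c * y k) = (\<lambda>k. c * eacp_mult a b x y k)"
proof
  fix k
  show "eacp_mult a b x (\<lambda>k. c * y k) k = c * eacp_mult a b x y k"
    by (cases k) (simp_all add: eacp_mult_Some eacp_mult_None sum_distrib_left algebra_simps)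
qed

definition eacp_r :: "'n option \<Rightarrow> 'a::zero_neq_one"
  where "eacp_r k = (if k = None then 1 else 0)"

definition eacp_hsum :: "'n option \<Rightarrow> 'a::zero_neq_one"
  where "eacp_hsum k = (if k = None then 0 else 1)"

lemma eacp_mult_r_r: "eacp_mult a b eacp_r eacp_r = (\<lambda>k. 0)"
proof
  fix k
  show "eacp_mult a b eacp_r eacp_r k = 0"
    by (cases k) (simp_all add: eacp_r_def eacp_mult_Some eacp_mult_None)
qed

lemma eacp_mult_hsum: "eacp_mult a b eacp_hsum y = (\<lambda>k. y None * eacp_mult a b eacp_hsum eacp_r k)"
proof
  fix k
  show "eacp_mult a b eacp_hsum y k = y None * eacp_mult a b eacp_hsum eacp_r k"
    by (cases k) (simp_all add: eacp_hsum_def eacp_r_def eacp_mult_Some eacp_mult_None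
        sum_distrib_left sum_divide_distrib ac_simps)
qed

lemma eacp_mult_r_cancel_Some:
  fixes a :: "'a::field^'n::finite^'n"
  assumes "(2::'a) \<noteq> 0" "det a \<noteq> 0" and "eacp_mult a b eacp_r y = eacp_mult a b eacp_r z"
  shows "y (Some i) = z (Some i)"
proof -
  have "(\<Sum>i\<in>UNIV. (y (Some i) - z (Some i)) * a$i$j) = 0" for j
    using fun_cong[OF assms(3), of "Some j"] assms(1)
    by (simp add: eacp_mult_Some eacp_r_def left_diff_distrib sum_subtractf)
  then show ?thesis
    using left_kernel_trivial_if_det_nz[OF assms(2)] by fastforce
qed

lemma eacp_mult_hsum_cancel_None:
  fixes a :: "'a::field^'n::finite^'n"
  assumes "(2::'a) \<noteq> 0" "det a \<noteq> 0" and "eacp_mult a b eacp_hsum y = eacp_mult a b eacp_hsum z"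
  shows "y None = z None"
proof -
  have "(\<Sum>i\<in>UNIV. (y None - z None) * a$i$j) = 0" for j
    using fun_cong[OF assms(3), of "Some j"] assms(1)
    by (simp add: eacp_mult_Some eacp_hsum_def left_diff_distrib sum_subtractf)
  then show ?thesis
    using left_kernel_trivial_if_det_nz[OF assms(2), of "\<lambda>_. y None - z None"] by simp
qed

lemma eacp_centroid_scale:
  assumes "T \<in> eacp_centroid a b"
  shows "T (\<lambda>k. c * x k) = (\<lambda>k. c * T x k)"
  using assms unfolding eacp_centroid_def coord_linear_def by blast

lemma eacp_centroid_mult_right:
  assumes "T \<in> eacp_centroid a b"
  shows "T (eacp_mult a b x y) = eacp_mult a b x (T y)"
  using assms unfolding eacp_centroid_def by blast

lemma eacp_centroid_r:
  fixes a :: "'a::field^'n::finite^'n"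
  assumes "(2::'a) \<noteq> 0" "det a \<noteq> 0" and T: "T \<in> eacp_centroid a b"
  shows "T eacp_r = (\<lambda>k. T eacp_r None * eacp_r k)"
proof
  have "eacp_mult a b eacp_r (T eacp_r) = T (eacp_mult a b eacp_r eacp_r)"
    by (simp add: eacp_centroid_mult_right[OF T])
  also have "\<dots> = T (\<lambda>k. 0 * eacp_r k)"
    by (simp add: eacp_mult_r_r)
  also have "\<dots> = eacp_mult a b eacp_r (\<lambda>k. 0 * eacp_r k)"
    unfolding eacp_centroid_scale[OF T] eacp_mult_scale_right by simp
  finally have "T eacp_r (Some i) = 0" for i
    using eacp_mult_r_cancel_Some[OF assms(1,2)] by fastforce
  then show "T eacp_r k = T eacp_r None * eacp_r k" for k
    by (cases k) (simp_all add: eacp_r_def)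
qed

lemma eacp_centroid_imp_scalar:
  fixes a :: "'a::field^'n::finite^'n"
  assumes "(2::'a) \<noteq> 0" "det a \<noteq> 0" and T: "T \<in> eacp_centroid a b"
  shows "T x = (\<lambda>k. T eacp_r None * x k)"
proof
  define s where "s = T eacp_r None"
  have Tr: "T eacp_r = (\<lambda>k. s * eacp_r k)"
    unfolding s_def by (rule eacp_centroid_r[OF assms])
  have "eacp_mult a b eacp_r (T x) = T (eacp_mult a b x eacp_r)"
    by (simp only: eacp_centroid_mult_right[OF T, symmetric] eacp_mult_commute)
  also have "\<dots> = eacp_mult a b x (\<lambda>k. s * eacp_r k)"
    by (simp only: eacp_centroid_mult_right[OF T] Tr)
  also have "\<dots> = eacp_mult a b eacp_r (\<lambda>k. s * x k)"
    by (simp only: eacp_mult_scale_right eacp_mult_commute)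
  finally have h_coords: "T x (Some i) = s * x (Some i)" for i
    using eacp_mult_r_cancel_Some[OF assms(1,2)] by fastforce
  have "eacp_mult a b eacp_hsum (T x) = T (\<lambda>k. x None * eacp_mult a b eacp_hsum eacp_r k)"
    by (simp only: eacp_centroid_mult_right[OF T, symmetric] eacp_mult_hsum[of a b x])
  also have "\<dots> = (\<lambda>k. x None * eacp_mult a b eacp_hsum (\<lambda>k. s * eacp_r k) k)"
    by (simp only: eacp_centroid_scale[OF T] eacp_centroid_mult_right[OF T] Tr)
  also have "\<dots> = eacp_mult a b eacp_hsum (\<lambda>k. s * x k)"
    by (simp only: eacp_mult_scale_right eacp_mult_hsum[of a b x]) (simp add: ac_simps)
  finally have r_coord: "T x None = s * x None"
    using eacp_mult_hsum_cancel_None[OF assms(1,2), of b "T x" "\<lambda>k. s * x k"] by simp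
  show "T x k = T eacp_r None * x k" for k
    by (cases k) (simp_all add: h_coords r_coord flip: s_def)
qed

lemma scalar_map_in_eacp_centroid: "(\<lambda>x k. c * x k) \<in> eacp_centroid a b"
  unfolding eacp_centroid_def coord_linear_def
proof (intro CollectI conjI allI)
  fix x y
  show "(\<lambda>k. c * eacp_mult a b x y k) = eacp_mult a b x (\<lambda>k. c * y k)"
    by (rule eacp_mult_scale_right[symmetric])
  show "(\<lambda>k. c * eacp_mult a b y x k) = eacp_mult a b (\<lambda>k. c * y k) x"
    by (subst (1 2) eacp_mult_commute) (rule eacp_mult_scale_right[symmetric])
qed (simp_all add: algebra_simps)

theorem mainTheorem12:
  fixes a :: "'a::field^'n::finite^'n" and b :: "'a^'n"
  assumes "(2::'a) \<noteq> 0"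
    and "det a \<noteq> 0"
  shows "eacp_centroid a b = {(\<lambda>x k. c * x k) | c. True}
         \<and> inj (\<lambda>c::'a. (\<lambda>x::'n option \<Rightarrow> 'a. \<lambda>k. c * x k))"
proof
  have "T = (\<lambda>x k. T eacp_r None * x k)" if "T \<in> eacp_centroid a b" for T
    using eacp_centroid_imp_scalar[OF assms that] by blast
  then show "eacp_centroid a b = {(\<lambda>x k. c * x k) | c. True}"
    using scalar_map_in_eacp_centroid by blast
  show "inj (\<lambda>c::'a. (\<lambda>x::'n option \<Rightarrow> 'a. \<lambda>k. c * x k))"
    by (rule injI) (drule fun_cong[where x = "\<lambda>_. 1"], simp add: fun_eq_iff)
qed

end
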